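(* Assume the setting and standing assumptions described in the context. Let $0<\tau_i<\tau_{i+1}$ and let $M_{\tau_i}$, $M_{\tau_{i+1}}$ be the corresponding isochronous manifolds. Then for every $x\in M_{\tau_i}$ there exists a unique $\lambda_x\in(0,1)$ such that $\lambda_x x\in M_{\tau_{i+1}}$, and there is no $\kappa_x\geq 1$ such that $\kappa_x x\in M_{\tau_{i+1}}$.
   Context: Let $f:\mathbb{R}^n\times\mathbb{R}^m\to\mathbb{R}^n$ and a feedback law $\upsilon:\mathbb{R}^n\to\mathbb{R}^m$ be given. Define the extended (event-triggered) vector field $F:\mathbb{R}^{2n}\to\mathbb{R}^{2n}$ by $F(z,e)=\big(f(z,\upsilon(z+e)),\,-f(z,\upsilon(z+e))\big)$ (state $\xi=(\zeta,\varepsilon)$, where $\varepsilon$ is the measurement error). For $x\in\mathbb{R}^n$, $\xi(t;x)$ denotes the solution of $\dot\xi=F(\xi)$ with $\xi(0;x)=(x,0)$. A triggering function $\phi:\mathbb{R}^{2n}\to\mathbb{R}$ is given, and the inter-event time of $x$ is $\tau(x)=\inf\{t>0:\phi(\xi(t;x))=0\}$. The isochronous manifold of time $\tau_\star>0$ is $M_{\tau_\star}=\{x\in\mathbb{R}^n:\tau(x)=\tau_\star\}$. Standing assumptions: (i) $F$ is smooth and homogeneous of degree $\alpha\ge 1$ with all weights equal to $1$, i.e. $F(\lambda\xi)=\lambda^{\alpha+1}F(\xi)$ for all $\lambda>0$; (ii) $\phi$ is smooth and homogeneous of degree $\theta\geq1$ with weights $1$, i.e. $\phi(\lambda\xi)=\lambda^{\theta+1}\phi(\xi)$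 for all $\lambda>0$; (iii) for every $x\in\mathbb{R}^n\setminus\{0\}$, $\phi((x,0))<0$ and there exists $t_x\in(0,\infty)$ with $\phi(\xi(t_x;x))=0$; (iv) compact sets $\mathrm{Z}\subset\mathbb{R}^n$ and $\Xi\subset\mathbb{R}^{2n}$, each containing a neighbourhood of the origin, are given such that for all $x\in\mathrm{Z}$ and $t\ge0$, $\phi(\xi(t;x))\le 0$ implies $\xi(t;x)\in\Xi$; (v) the origin is the only equilibrium of $\dot\zeta=f(\zeta,\upsilon(\zeta))$. *)

theory Defs
  imports "HOL-Analysis.Analysis"
begin

text \<open>This is the greatest-fixed-point description of "all iterated directional
  derivatives exist everywhere", i.e. C-infinity on a finite-dimensional space.\<close>
definition smooth_fun :: "('a::euclidean_space \<Rightarrow> 'b::real_normed_vector) \<Rightarrow> bool" where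
  "smooth_fun g \<longleftrightarrow> (\<exists>S. g \<in> S \<and> (\<forall>h\<in>S. \<exists>h'. (\<forall>x. (h has_derivative h' x) (at x))
                                 \<and> (\<forall>v. (\<lambda>x. h' x v) \<in> S)))"

definition ext_field ::
  "('n \<Rightarrow> 'm \<Rightarrow> 'n::real_normed_vector) \<Rightarrow> ('n \<Rightarrow> 'm) \<Rightarrow> 'n \<times> 'n \<Rightarrow> 'n \<times> 'n" where
  "ext_field f u = (\<lambda>(z, e). (f z (u (z + e)), - f z (u (z + e))))"

definition is_sol :: "('a \<times> 'a \<Rightarrow> 'a \<times> 'a) \<Rightarrow> 'a::real_normed_vector \<Rightarrow> real
                      \<Rightarrow> (real \<Rightarrow> 'a \<times> 'a) \<Rightarrow> bool" where
  "is_sol F x T y \<longleftrightarrow> 0 \<le> T \<and> y 0 = (x, 0) \<and>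
     (\<forall>s\<in>{0..T}. (y has_vector_derivative F (y s)) (at s within {0..T}))"

text \<open>Inter-event time tau(x) = inf {t > 0. phi(xi(t;x)) = 0}; xi(t;x) is the (unique, F being
  smooth) solution value at t, so we quantify over solutions defined on [0,t].\<close>
definition inter_event_time :: "('a \<times> 'a \<Rightarrow> 'a \<times> 'a) \<Rightarrow> ('a \<times> 'a \<Rightarrow> real)
                                 \<Rightarrow> 'a::real_normed_vector \<Rightarrow> real" where
  "inter_event_time F \<phi> x = Inf {t. t > 0 \<and> (\<exists>y. is_sol F x t y \<and> \<phi> (y t) = 0)}"

definition isochronous :: "('a \<times> 'a \<Rightarrow> 'a \<times> 'a) \<Rightarrow> ('a \<times> 'a \<Rightarrow> real) \<Rightarrow> real
                           \<Rightarrow> 'a::real_normed_vector set" where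
  "isochronous F \<phi> \<tau>s = {x. inter_event_time F \<phi> x = \<tau>s}"

end

theory Submission imports Defs begin

text \<open>If F is homogeneous of degree \<alpha> then the rescaled curve t \<mapsto> l y(l^\<alpha> t) solves the same
  equation from l x. Hence the event times of l x are those of x divided by l^\<alpha>, so
  \<tau>(l x) = \<tau>(x) / l^\<alpha>. Along the ray through x \<noteq> 0 the inter-event time is therefore strictly
  decreasing and takes the value \<tau>j exactly once, at l = (\<tau>i / \<tau>j)^(1/\<alpha>), which lies in (0,1).\<close>

lemma is_sol_scaleR:
  fixes F :: "'a::real_normed_vector \<times> 'a \<Rightarrow> 'a \<times> 'a"
  assumes F_hom: "\<And>l \<xi>. l > 0 \<Longrightarrow> F (l *\<^sub>R \<xi>) = (l powr (\<alpha> + 1)) *\<^sub>R F \<xi>"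
    and l: "l > 0" and sol: "is_sol F x T y"
  shows "is_sol F (l *\<^sub>R x) (T / l powr \<alpha>) (\<lambda>t. l *\<^sub>R y (l powr \<alpha> * t))"
proof -
  define c where "c = l powr \<alpha>"
  have c: "c > 0" using l by (simp add: c_def)
  have T: "T \<ge> 0" and y0: "y 0 = (x, 0)"
    and y': "\<And>s. s \<in> {0..T} \<Longrightarrow> (y has_vector_derivative F (y s)) (at s within {0..T})"
    using sol by (auto simp: is_sol_def)
  have "((\<lambda>t. l *\<^sub>R y (c * t)) has_vector_derivative F (l *\<^sub>R y (c * s))) (at s within {0..T/c})"
    if s: "s \<in> {0..T/c}" for s
  proof -
    have "c * s \<in> {0..T}" using s c by (auto simp: field_simps)
    moreover have "(*) c ` {0..T/c} \<subseteq> {0..T}" using c by (auto simp: field_simps)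
    ultimately have "(y has_vector_derivative F (y (c * s))) (at (c * s) within (*) c ` {0..T/c})"
      using y' has_vector_derivative_within_subset by blast
    then have "((y \<circ> (*) c) has_vector_derivative c *\<^sub>R F (y (c * s))) (at s within {0..T/c})"
      by (intro vector_diff_chain_within) (auto intro!: derivative_eq_intros)
    from has_vector_derivative_scaleR[OF DERIV_const[of l] this]
    have "((\<lambda>t. l *\<^sub>R y (c * t)) has_vector_derivative l *\<^sub>R c *\<^sub>R F (y (c * s)))
        (at s within {0..T/c})"
      by (simp add: o_def)
    moreover have "l *\<^sub>R c *\<^sub>R F (y (c * s)) = F (l *\<^sub>R y (c * s))"
      using l by (simp add: F_hom c_def powr_add)
    ultimately show ?thesis by simp
  qed
  then show ?thesis using T c y0 by (simp add: is_sol_def c_def)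
qed

definition event_times :: "('a \<times> 'a \<Rightarrow> 'a \<times> 'a) \<Rightarrow> ('a \<times> 'a \<Rightarrow> real) \<Rightarrow> 'a::real_normed_vector
                             \<Rightarrow> real set" where
  "event_times F \<phi> x = {t. t > 0 \<and> (\<exists>y. is_sol F x t y \<and> \<phi> (y t) = 0)}"

lemma inter_event_time_eq_Inf: "inter_event_time F \<phi> x = Inf (event_times F \<phi> x)"
  by (simp add: inter_event_time_def event_times_def)

lemma event_times_scaleR:
  fixes F :: "'a::real_normed_vector \<times> 'a \<Rightarrow> 'a \<times> 'a"
  assumes F_hom: "\<And>l \<xi>. l > 0 \<Longrightarrow> F (l *\<^sub>R \<xi>) = (l powr (\<alpha> + 1)) *\<^sub>R F \<xi>"
    and \<phi>_hom: "\<And>l \<xi>. l > 0 \<Longrightarrow> \<phi> (l *\<^sub>R \<xi>) = l powr (\<theta> + 1) * \<phi> \<xi>"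
    and l: "l > 0"
  shows "event_times F \<phi> (l *\<^sub>R x) = (\<lambda>s. s / l powr \<alpha>) ` event_times F \<phi> x"
proof -
  have scaled: "t / l powr \<alpha> \<in> event_times F \<phi> (l *\<^sub>R x)"
    if t: "t \<in> event_times F \<phi> x" and l: "l > 0" for l x t
  proof -
    obtain y where "t > 0" and y: "is_sol F x t y" "\<phi> (y t) = 0"
      using t by (auto simp: event_times_def)
    moreover have "\<phi> (l *\<^sub>R y (l powr \<alpha> * (t / l powr \<alpha>))) = 0" using l y(2) by (simp add: \<phi>_hom)
    ultimately show ?thesis
      using is_sol_scaleR[OF F_hom l y(1)] l by (auto simp: event_times_def)
  qed
  show ?thesis
  proof (intro antisym subsetI)
    fix t assume "t \<in> event_times F \<phi> (l *\<^sub>R x)"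
    then have "t / inverse l powr \<alpha> \<in> event_times F \<phi> (inverse l *\<^sub>R l *\<^sub>R x)"
      using l by (intro scaled) auto
    then have "t * l powr \<alpha> \<in> event_times F \<phi> x"
      using l by (simp add: inverse_powr divide_inverse)
    then show "t \<in> (\<lambda>s. s / l powr \<alpha>) ` event_times F \<phi> x"
      using l by (auto intro!: image_eqI[where x="t * l powr \<alpha>"])
  qed (use scaled l in auto)
qed

lemma Inf_image_divide:
  fixes S :: "real set"
  assumes "S \<noteq> {}" "bdd_below S" "c > 0"
  shows "Inf ((\<lambda>s. s / c) ` S) = Inf S / c"
  using assms
  by (intro continuous_at_Inf_mono[symmetric])
     (auto intro!: monoI divide_right_mono continuous_intros)

lemma inter_event_time_scaleR:
  fixes F :: "'a::real_normed_vector \<times> 'a \<Rightarrow> 'a \<times> 'a"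
  assumes F_hom: "\<And>l \<xi>. l > 0 \<Longrightarrow> F (l *\<^sub>R \<xi>) = (l powr (\<alpha> + 1)) *\<^sub>R F \<xi>"
    and \<phi>_hom: "\<And>l \<xi>. l > 0 \<Longrightarrow> \<phi> (l *\<^sub>R \<xi>) = l powr (\<theta> + 1) * \<phi> \<xi>"
    and l: "l > 0" and hit: "event_times F \<phi> x \<noteq> {}"
  shows "inter_event_time F \<phi> (l *\<^sub>R x) = inter_event_time F \<phi> x / l powr \<alpha>"
proof -
  have "bdd_below (event_times F \<phi> x)"
    by (auto simp: event_times_def intro!: bdd_belowI[where m=0])
  then show ?thesis
    using hit l by (simp add: inter_event_time_eq_Inf event_times_scaleR[OF F_hom \<phi>_hom l]
        Inf_image_divide)
qed

lemma homogeneous_zero: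
  fixes g :: "'a::real_vector \<Rightarrow> 'b::real_vector"
  assumes hom: "\<And>l \<xi>. l > 0 \<Longrightarrow> g (l *\<^sub>R \<xi>) = l powr d *\<^sub>R g \<xi>" and d: "d \<noteq> 0"
  shows "g 0 = 0"
proof -
  have "g 0 = 2 powr d *\<^sub>R g 0" using hom[of 2 0] by simp
  moreover have "(2::real) powr d \<noteq> 1" using d by (simp add: powr_eq_one_iff_gen)
  ultimately show ?thesis by (metis scaleR_cancel_right scaleR_one)
qed

lemma inter_event_time_zero:
  assumes "F 0 = 0" "\<phi> 0 = 0"
  shows "inter_event_time F \<phi> 0 = 0"
proof -
  have "is_sol F 0 t (\<lambda>_. 0)" if "t \<ge> 0" for t
    using assms that has_vector_derivative_const[of 0] by (auto simp: is_sol_def zero_prod_def[symmetric])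
  then have "event_times F \<phi> 0 = {0<..}"
    using assms by (auto simp: event_times_def intro!: exI[of _ "\<lambda>_. 0"])
  then show ?thesis by (simp add: inter_event_time_eq_Inf)
qed

lemma powr_eq_in_unit_interval:
  fixes a \<alpha> :: real
  assumes "\<alpha> > 0" "0 < a" "a < 1"
  shows "(\<exists>!l. l \<in> {0<..<1} \<and> l powr \<alpha> = a) \<and> \<not> (\<exists>k\<ge>1. k powr \<alpha> = a)"
proof
  show "\<exists>!l. l \<in> {0<..<1} \<and> l powr \<alpha> = a"
  proof (rule ex1I)
    show "a powr (1 / \<alpha>) \<in> {0<..<1} \<and> (a powr (1 / \<alpha>)) powr \<alpha> = a"
      using assms powr_less_mono2[of "1 / \<alpha>" a 1] by (simp add: powr_powr)
    show "l = a powr (1 / \<alpha>)" if "l \<in> {0<..<1} \<and> l powr \<alpha> = a" for l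
      using that assms by (auto simp: powr_powr)
  qed
  show "\<not> (\<exists>k\<ge>1. k powr \<alpha> = a)"
    using assms ge_one_powr_ge_zero[of _ \<alpha>] by force
qed

theorem proposition2:
  fixes f :: "real^'n \<Rightarrow> real^'m \<Rightarrow> real^'n"
    and \<upsilon> :: "real^'n \<Rightarrow> real^'m"
    and \<phi> :: "((real^'n) \<times> (real^'n)) \<Rightarrow> real"
    and \<alpha> \<theta> \<tau>i \<tau>j :: real
    and Z :: "(real^'n) set" and \<Xi> :: "((real^'n) \<times> (real^'n)) set"
  assumes F_smooth: "smooth_fun (ext_field f \<upsilon>)"
    and \<alpha>: "\<alpha> \<ge> 1"
    and F_hom: "\<And>l \<xi>. l > 0 \<Longrightarrow> ext_field f \<upsilon> (l *\<^sub>R \<xi>) = (l powr (\<alpha> + 1)) *\<^sub>R ext_field f \<upsilon> \<xi>"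
    and \<phi>_smooth: "smooth_fun \<phi>"
    and \<theta>: "\<theta> \<ge> 1"
    and \<phi>_hom: "\<And>l \<xi>. l > 0 \<Longrightarrow> \<phi> (l *\<^sub>R \<xi>) = l powr (\<theta> + 1) * \<phi> \<xi>"
    and \<phi>_neg: "\<And>x. x \<noteq> 0 \<Longrightarrow> \<phi> (x, 0) < 0"
    and \<phi>_hit: "\<And>x. x \<noteq> 0 \<Longrightarrow> \<exists>t>0. \<exists>y. is_sol (ext_field f \<upsilon>) x t y \<and> \<phi> (y t) = 0"
    and Z: "compact Z" "0 \<in> interior Z"
    and \<Xi>: "compact \<Xi>" "0 \<in> interior \<Xi>"
    and Z_\<Xi>: "\<And>x t y. x \<in> Z \<Longrightarrow> t \<ge> 0 \<Longrightarrow> is_sol (ext_field f \<upsilon>) x t y \<Longrightarrow> \<phi> (y t) \<le> 0 \<Longrightarrow> y t \<in> \<Xi>"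
    and equil: "\<And>z. f z (\<upsilon> z) = 0 \<longleftrightarrow> z = 0"
    and \<tau>: "0 < \<tau>i" "\<tau>i < \<tau>j"
    and x: "x \<in> isochronous (ext_field f \<upsilon>) \<phi> \<tau>i"
  shows "(\<exists>!l. l \<in> {0<..<1} \<and> l *\<^sub>R x \<in> isochronous (ext_field f \<upsilon>) \<phi> \<tau>j)
         \<and> \<not> (\<exists>k\<ge>1. k *\<^sub>R x \<in> isochronous (ext_field f \<upsilon>) \<phi> \<tau>j)"
proof -
  let ?F = "ext_field f \<upsilon>"
  have "?F 0 = 0" using homogeneous_zero[of ?F "\<alpha> + 1"] F_hom \<alpha> by simp
  moreover have "\<phi> 0 = 0" using homogeneous_zero[of \<phi> "\<theta> + 1"] \<phi>_hom \<theta> by simp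
  ultimately have "x \<noteq> 0"
    using x \<tau> inter_event_time_zero[of ?F \<phi>] by (auto simp: isochronous_def)
  then have "event_times ?F \<phi> x \<noteq> {}" using \<phi>_hit by (auto simp: event_times_def)
  then have scaled: "inter_event_time ?F \<phi> (l *\<^sub>R x) = \<tau>i / l powr \<alpha>" if "l > 0" for l
    using inter_event_time_scaleR[OF F_hom \<phi>_hom that] x by (simp add: isochronous_def)
  have on_ray: "l *\<^sub>R x \<in> isochronous ?F \<phi> \<tau>j \<longleftrightarrow> l powr \<alpha> = \<tau>i / \<tau>j" if "l > 0" for l
    using scaled[OF that] that \<tau> by (auto simp: isochronous_def field_simps)
  have "(\<exists>!l. l \<in> {0<..<1} \<and> l powr \<alpha> = \<tau>i / \<tau>j) \<and> \<not> (\<exists>k\<ge>1. k powr \<alpha> = \<tau>i / \<tau>j)"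
    using \<alpha> \<tau> by (intro powr_eq_in_unit_interval) auto
  moreover have "l \<in> {0<..<1} \<and> l *\<^sub>R x \<in> isochronous ?F \<phi> \<tau>j \<longleftrightarrow>
      l \<in> {0<..<1} \<and> l powr \<alpha> = \<tau>i / \<tau>j" for l
    using on_ray[of l] by auto
  ultimately show ?thesis using on_ray by auto
qed

end
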